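(* Let $\psi$ and $\varphi$ be entire functions on $\mathbb{C}$ with $\varphi(z)=az+b$, where $a,b\in\mathbb{C}$ and $|a|<1$, and suppose that the weighted composition operator $C_{\psi,\varphi}$ is bounded on $\mathcal{F}^2$. If $\lambda$ is an eigenvalue of $C_{\psi,\varphi}$, then $|\lambda|\le \left|\psi\!\left(\frac{b}{1-a}\right)\right|$. Moreover, if $\psi\!\left(\frac{b}{1-a}\right)=0$ and $\varphi$ and $\psi$ are both nonconstant, then $C_{\psi,\varphi}$ has no eigenvalues.
   Context: $\mathcal{F}^2$ is the Fock space: the Hilbert space of entire functions $f$ on $\mathbb{C}$ with $\int_{\mathbb{C}}|f(z)|^2\,d\mu(z)<\infty$, where $d\mu(z)=\pi^{-1}e^{-|z|^2}\,dA(z)$ and $dA$ is Lebesgue area measure, with inner product $\langle f,g\rangle=\int_{\mathbb{C}} f\overline{g}\,d\mu$. For an entire function $\psi$ and an entire function $\varphi$, the weighted composition operator is $C_{\psi,\varphi}f=\psi\cdot(f\circ\varphi)$. *)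

theory Defs
  imports "HOL-Analysis.Analysis"
begin

definition fock_weight :: "complex \<Rightarrow> real" where
  "fock_weight z = exp (- (cmod z)\<^sup>2) / pi"

text \<open>The Fock space F^2: entire functions square-integrable w.r.t. mu
  (dA = Lebesgue measure lborel on complex = R^2).\<close>
definition fock_space :: "(complex \<Rightarrow> complex) set" where
  "fock_space = {f. f holomorphic_on UNIV \<and>
     integrable lborel (\<lambda>z. (cmod (f z))\<^sup>2 * fock_weight z)}"

definition fock_norm :: "(complex \<Rightarrow> complex) \<Rightarrow> real" where
  "fock_norm f = sqrt (\<integral>z. (cmod (f z))\<^sup>2 * fock_weight z \<partial>lborel)"

definition wcomp :: "(complex \<Rightarrow> complex) \<Rightarrow> (complex \<Rightarrow> complex) \<Rightarrow>
    (complex \<Rightarrow> complex) \<Rightarrow> (complex \<Rightarrow> complex)" where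
  "wcomp psi phi f = (\<lambda>z. psi z * f (phi z))"

definition bounded_on_fock :: "((complex \<Rightarrow> complex) \<Rightarrow> (complex \<Rightarrow> complex)) \<Rightarrow> bool" where
  "bounded_on_fock T \<longleftrightarrow> (\<forall>f\<in>fock_space. T f \<in> fock_space) \<and>
     (\<exists>M. \<forall>f\<in>fock_space. fock_norm (T f) \<le> M * fock_norm f)"

definition fock_eigenvalue :: "((complex \<Rightarrow> complex) \<Rightarrow> (complex \<Rightarrow> complex)) \<Rightarrow> complex \<Rightarrow> bool" where
  "fock_eigenvalue T lam \<longleftrightarrow>
     (\<exists>f\<in>fock_space. f \<noteq> (\<lambda>z. 0) \<and> T f = (\<lambda>z. lam * f z))"

end

theory Submission
  imports Defs "HOL-Complex_Analysis.Complex_Analysis"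
begin

text \<open>Let \<open>z\<^sub>0 = b / (1 - a)\<close> be the fixed point of \<open>\<phi>\<close>, and let \<open>f\<close> be an eigenfunction
  for \<open>\<lambda>\<close>. If \<open>f\<close> vanishes to order \<open>n\<close> at \<open>z\<^sub>0\<close>, then \<open>\<phi>(z) - z\<^sub>0 = a (z - z\<^sub>0)\<close> makes
  \<open>f \<circ> \<phi>\<close> vanish to the same order, with leading coefficient multiplied by \<open>a\<^sup>n\<close>.
  Comparing the leading terms of \<open>\<psi> (f \<circ> \<phi>) = \<lambda> f\<close> gives \<open>\<lambda> = \<psi>(z\<^sub>0) a\<^sup>n\<close>, and
  \<open>|a| < 1\<close> gives the bound. If \<open>\<psi>(z\<^sub>0) = 0\<close>, then \<open>\<lambda> = 0\<close>, so \<open>\<psi> (f \<circ> \<phi>) = 0\<close>; since \<open>\<psi> \<noteq> 0\<close>,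
  the identity theorem gives \<open>f \<circ> \<phi> = 0\<close>, and \<open>f = 0\<close> because \<open>\<phi>\<close> is onto.\<close>

lemma eq_at_if_isCont_eventually_eq:
  fixes g h :: "'a::{perfect_space,t2_space} \<Rightarrow> 'b::t2_space"
  assumes "isCont g x" "isCont h x" "eventually (\<lambda>y. g y = h y) (at x)"
  shows "g x = h x"
proof -
  have "(g \<longlongrightarrow> h x) (at x)"
    using Lim_transform_eventually[OF assms(2)[unfolded isCont_def]] assms(3)
    by (simp add: eq_commute)
  with assms(1) show ?thesis
    by (intro tendsto_unique[OF at_neq_bot]) (simp_all add: isCont_def)
qed

lemma holomorphic_mult_eq_0_cases:
  assumes "f holomorphic_on S" "g holomorphic_on S" "open S" "connected S"
    and "\<And>z. z \<in> S \<Longrightarrow> f z * g z = 0"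
  shows "(\<forall>z\<in>S. f z = 0) \<or> (\<forall>z\<in>S. g z = 0)"
proof (rule disjCI)
  assume "\<not> (\<forall>z\<in>S. g z = 0)"
  then obtain w where w: "w \<in> S" "g w \<noteq> 0" by blast
  define U where "U = S \<inter> g -` (- {0})"
  have "open U"
    unfolding U_def using assms(2,3)
    by (intro continuous_open_preimage holomorphic_on_imp_continuous_on) auto
  have "f z = 0" if "z \<in> U" for z
    using assms(5)[of z] that unfolding U_def by auto
  then show "\<forall>z\<in>S. f z = 0"
    using analytic_continuation_open[of U S f "\<lambda>_. 0"] \<open>open U\<close> w assms(1,3,4)
    by (auto simp: U_def)
qed

lemma affine_fixed_point:
  fixes a b :: complex
  assumes "a \<noteq> 1"
  shows "a * (b / (1 - a)) + b = b / (1 - a)"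
  using assms by (simp add: field_simps)

text \<open>Here \<open>a \<noteq> 1\<close> suffices, as only the behaviour near the fixed point matters.\<close>

lemma affine_weighted_composition_eigenvalue:
  fixes psi f :: "complex \<Rightarrow> complex" and a b lam :: complex
  defines "z0 \<equiv> b / (1 - a)"
  assumes "a \<noteq> 1" "isCont psi z0" "f holomorphic_on UNIV" "f \<noteq> (\<lambda>z. 0)"
    and eigen: "\<And>z. psi z * f (a * z + b) = lam * f z"
  shows "\<exists>n. lam = psi z0 * a ^ n"
proof -
  have z0_fixed: "a * z0 + b = z0"
    unfolding z0_def using \<open>a \<noteq> 1\<close> by (rule affine_fixed_point)
  show ?thesis
  proof (cases "f z0 = 0")
    case False
    then have "lam = psi z0 * a ^ 0"
      using eigen[of z0] by (simp add: z0_fixed)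
    then show ?thesis ..
  next
    case True
    have "\<not> f constant_on UNIV"
      using True \<open>f \<noteq> (\<lambda>z. 0)\<close> by (auto simp: constant_on_def)
    then obtain g r n where "0 < r" and g: "g holomorphic_on ball z0 r"
        and factor: "\<And>w. w \<in> ball z0 r \<Longrightarrow> f w = (w - z0) ^ n * g w"
        and g_nz: "\<And>w. w \<in> ball z0 r \<Longrightarrow> g w \<noteq> 0"
      using holomorphic_factor_zero_nonconstant[OF \<open>f holomorphic_on UNIV\<close> open_UNIV connected_UNIV UNIV_I True]
      by metis
    have "isCont g z0"
      using g \<open>0 < r\<close> by (intro continuous_on_interior[OF holomorphic_on_imp_continuous_on]) auto
    have "((\<lambda>w. a * w + b) \<longlongrightarrow> a * z0 + b) (at z0)"
      by (intro tendsto_intros)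
    then have "eventually (\<lambda>w. a * w + b \<in> ball z0 r) (at z0)"
      using z0_fixed \<open>0 < r\<close> by (intro topological_tendstoD) auto
    moreover have "eventually (\<lambda>w. w \<in> ball z0 r - {z0}) (at z0)"
      using \<open>0 < r\<close> by (intro eventually_at_in_open) auto
    ultimately have "eventually (\<lambda>w. psi w * a ^ n * g (a * w + b) = lam * g w) (at z0)"
    proof eventually_elim
      case (elim w)
      then have "w \<in> ball z0 r" "w \<noteq> z0" by simp_all
      have "a * w + b - z0 = a * (w - z0)"
        by (metis z0_fixed add_diff_cancel_right right_diff_distrib)
      then have "psi w * ((a * (w - z0)) ^ n * g (a * w + b)) = lam * ((w - z0) ^ n * g w)"
        using eigen[of w] unfolding factor[OF \<open>w \<in> ball z0 r\<close>] factor[OF elim(1)] by simp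
      then have "(w - z0) ^ n * (psi w * a ^ n * g (a * w + b)) = (w - z0) ^ n * (lam * g w)"
        by (simp only: power_mult_distrib ac_simps)
      with \<open>w \<noteq> z0\<close> show ?case by simp
    qed
    moreover have "isCont (\<lambda>w. g (a * w + b)) z0"
    proof (rule isCont_o2[where g = g])
      show "isCont (\<lambda>w. a * w + b) z0" by (intro continuous_intros)
      show "isCont g (a * z0 + b)" using \<open>isCont g z0\<close> by (simp only: z0_fixed)
    qed
    ultimately have "psi z0 * a ^ n * g (a * z0 + b) = lam * g z0"
      using \<open>isCont psi z0\<close> \<open>isCont g z0\<close>
      by (intro eq_at_if_isCont_eventually_eq continuous_intros)
    then have "lam = psi z0 * a ^ n"
      using g_nz[of z0] \<open>0 < r\<close> unfolding z0_fixed by simp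
    then show ?thesis ..
  qed
qed

lemma affine_weighted_composition_kernel_trivial:
  fixes psi f :: "complex \<Rightarrow> complex" and a b :: complex
  assumes "psi holomorphic_on UNIV" "psi \<noteq> (\<lambda>z. 0)" "f holomorphic_on UNIV" "a \<noteq> 0"
    and "\<And>z. psi z * f (a * z + b) = 0"
  shows "f = (\<lambda>z. 0)"
proof -
  have "(\<lambda>z. f (a * z + b)) holomorphic_on UNIV"
    by (rule holomorphic_on_compose_gen[OF _ assms(3), unfolded o_def]) (auto intro!: holomorphic_intros)
  then have "(\<forall>z\<in>UNIV. psi z = 0) \<or> (\<forall>z\<in>UNIV. f (a * z + b) = 0)"
    using assms(5) by (intro holomorphic_mult_eq_0_cases[OF assms(1) _ open_UNIV connected_UNIV])
  with assms(2) have f_affine: "f (a * z + b) = 0" for z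
    by (auto simp: fun_eq_iff)
  show ?thesis
  proof
    fix z
    show "f z = 0"
      using f_affine[of "(z - b) / a"] \<open>a \<noteq> 0\<close> by simp
  qed
qed

lemma fock_eigenvalue_wcompE:
  assumes "fock_eigenvalue (wcomp psi phi) lam"
  obtains f where "f holomorphic_on UNIV" "f \<noteq> (\<lambda>z. 0)" "\<And>z. psi z * f (phi z) = lam * f z"
proof -
  obtain f where f: "f \<in> fock_space" "f \<noteq> (\<lambda>z. 0)" "wcomp psi phi f = (\<lambda>z. lam * f z)"
    using assms unfolding fock_eigenvalue_def by blast
  show thesis
  proof (rule that[OF _ f(2)])
    show "f holomorphic_on UNIV" using f(1) by (simp add: fock_space_def)
    show "psi z * f (phi z) = lam * f z" for z
      using fun_cong[OF f(3), of z] by (simp add: wcomp_def)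
  qed
qed

theorem proposition2p1:
  fixes psi phi :: "complex \<Rightarrow> complex" and a b :: complex
  assumes "psi holomorphic_on UNIV"
    and "phi = (\<lambda>z. a * z + b)"
    and "cmod a < 1"
    and "bounded_on_fock (wcomp psi phi)"
  shows "(\<forall>lam. fock_eigenvalue (wcomp psi phi) lam \<longrightarrow> cmod lam \<le> cmod (psi (b / (1 - a)))) \<and>
         (psi (b / (1 - a)) = 0 \<and> \<not> (\<exists>c. \<forall>z. phi z = c) \<and> \<not> (\<exists>c. \<forall>z. psi z = c)
           \<longrightarrow> (\<forall>lam. \<not> fock_eigenvalue (wcomp psi phi) lam))"
proof -
  define z0 where "z0 = b / (1 - a)"
  have "a \<noteq> 1" using assms(3) by auto
  have "isCont psi z0"
    using continuous_on_eq_continuous_at[OF open_UNIV] holomorphic_on_imp_continuous_on[OF assms(1)]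
    by blast
  have eigen_value: "\<exists>n. lam = psi z0 * a ^ n" if eigenvalue: "fock_eigenvalue (wcomp psi phi) lam" for lam
  proof -
    obtain f where "f holomorphic_on UNIV" "f \<noteq> (\<lambda>z. 0)" "\<And>z. psi z * f (phi z) = lam * f z"
      using eigenvalue by (elim fock_eigenvalue_wcompE) blast
    with \<open>a \<noteq> 1\<close> \<open>isCont psi z0\<close> show ?thesis
      unfolding z0_def assms(2) by (rule affine_weighted_composition_eigenvalue)
  qed
  have "cmod lam \<le> cmod (psi z0)" if eigenvalue: "fock_eigenvalue (wcomp psi phi) lam" for lam
  proof -
    obtain n where "lam = psi z0 * a ^ n" using eigen_value[OF eigenvalue] by blast
    then have "cmod lam = cmod (psi z0) * cmod a ^ n" by (simp add: norm_mult norm_power)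
    also have "\<dots> \<le> cmod (psi z0)"
      using \<open>cmod a < 1\<close> by (simp add: mult_left_le power_le_one)
    finally show ?thesis .
  qed
  moreover have "\<not> fock_eigenvalue (wcomp psi phi) lam"
    if "psi z0 = 0" "\<not> (\<exists>c. \<forall>z. phi z = c)" "\<not> (\<exists>c. \<forall>z. psi z = c)" for lam
  proof
    assume eigenvalue: "fock_eigenvalue (wcomp psi phi) lam"
    then obtain f where "f holomorphic_on UNIV" "f \<noteq> (\<lambda>z. 0)"
      "\<And>z. psi z * f (phi z) = lam * f z"
      by (elim fock_eigenvalue_wcompE) blast
    moreover have "lam = 0" using eigen_value[OF eigenvalue] \<open>psi z0 = 0\<close> by auto
    moreover have "psi \<noteq> (\<lambda>z. 0)" using that(3) by auto
    moreover have "a \<noteq> 0" using that(2) unfolding assms(2) by auto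
    ultimately show False
      using affine_weighted_composition_kernel_trivial[OF assms(1)] unfolding assms(2) by auto
  qed
  ultimately show ?thesis unfolding z0_def by blast
qed

end
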